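(* Let $(X,\mathcal T,P,\leq,\{\sigma_x:x\in X\})$ be a typed topological space with $X$ finite. For any subset $D\subseteq X$ and any type $p\in P$ there is a unique partition $D=D_1\cup D_2\cup\dots\cup D_t$ such that each $D_i$ is $p$-closure connected and the union of any two or more of the $D_i$'s is not $p$-closure connected.
   Context: A typed topological space $(X,\mathcal T,P,\leq,\{\sigma_x:x\in X\})$ consists of a topological space $(X,\mathcal T)$, a partially ordered set $(P,\leq)$ of types, and for each $x\in X$ a partial function $\sigma_x:\{O\in\mathcal T:x\in O\}\to P$ such that for all $U,V$ in its domain, $\sigma_x(U)\leq\sigma_x(V)$ iff $U\subseteq V$. $U$ is a type-$p$ neighborhood of $x$ if $U$ is in the domain of $\sigma_x$ and $\sigma_x(U)=p$. $x$ is a $p$-accumulation point of $A$ if every type-$p$ neighborhood of $x$ meets $A$. $p\vdash CL_1(A)=A\cup\{p\text{-accumulation points of }A\}$, $p\vdash CL_n(A)=p\vdash CL_1(p\vdash CL_{n-1}(A))$, $p\vdash tr(A)=\bigcup_{n\ge1}p\vdash CL_n(A)$. Two sets $E,E'$ are $p$-closure disjoint if $p\vdash tr(E)\cap p\vdash tr(E')=\emptyset$. A set $D$ is $p$-closure connected if it cannot be partitioned into two non-empty $p$-closure disjoint subsets. *)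

theory Defs
  imports "HOL-Analysis.Analysis" "HOL-Library.Disjoint_Sets"
begin

text \<open>A typed topological space: a topology T on X = topspace T, a poset (P, le) of types,
  and for every point x a partial function sg x from the open neighbourhoods of x to P
  (None = undefined) that is an order embedding w.r.t. inclusion.\<close>

definition typed_top_space ::
  "'a topology \<Rightarrow> 'p set \<Rightarrow> ('p \<Rightarrow> 'p \<Rightarrow> bool) \<Rightarrow> ('a \<Rightarrow> 'a set \<Rightarrow> 'p option) \<Rightarrow> bool" where
  "typed_top_space T P le sg \<longleftrightarrow>
     (\<forall>p\<in>P. le p p) \<and>
     (\<forall>p\<in>P. \<forall>q\<in>P. le p q \<and> le q p \<longrightarrow> p = q) \<and>
     (\<forall>p\<in>P. \<forall>q\<in>P. \<forall>r\<in>P. le p q \<and> le q r \<longrightarrow> le p r) \<and>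
     (\<forall>x\<in>topspace T. \<forall>U. sg x U \<noteq> None \<longrightarrow>
          openin T U \<and> x \<in> U \<and> the (sg x U) \<in> P) \<and>
     (\<forall>x\<in>topspace T. \<forall>U V. sg x U \<noteq> None \<longrightarrow> sg x V \<noteq> None \<longrightarrow>
          (le (the (sg x U)) (the (sg x V)) \<longleftrightarrow> U \<subseteq> V))"

definition p_acc_point :: "('a \<Rightarrow> 'a set \<Rightarrow> 'p option) \<Rightarrow> 'p \<Rightarrow> 'a \<Rightarrow> 'a set \<Rightarrow> bool" where
  "p_acc_point sg p x A \<longleftrightarrow> (\<forall>U. sg x U = Some p \<longrightarrow> U \<inter> A \<noteq> {})"

definition p_CL1 :: "'a topology \<Rightarrow> ('a \<Rightarrow> 'a set \<Rightarrow> 'p option) \<Rightarrow> 'p \<Rightarrow> 'a set \<Rightarrow> 'a set" where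
  "p_CL1 T sg p A = A \<union> {x \<in> topspace T. p_acc_point sg p x A}"

fun p_CL :: "'a topology \<Rightarrow> ('a \<Rightarrow> 'a set \<Rightarrow> 'p option) \<Rightarrow> 'p \<Rightarrow> nat \<Rightarrow> 'a set \<Rightarrow> 'a set" where
  "p_CL T sg p 0 A = A"
| "p_CL T sg p (Suc n) A = p_CL1 T sg p (p_CL T sg p n A)"

definition p_tr :: "'a topology \<Rightarrow> ('a \<Rightarrow> 'a set \<Rightarrow> 'p option) \<Rightarrow> 'p \<Rightarrow> 'a set \<Rightarrow> 'a set" where
  "p_tr T sg p A = (\<Union>n\<in>{1..}. p_CL T sg p n A)"

definition p_closure_disjoint ::
  "'a topology \<Rightarrow> ('a \<Rightarrow> 'a set \<Rightarrow> 'p option) \<Rightarrow> 'p \<Rightarrow> 'a set \<Rightarrow> 'a set \<Rightarrow> bool" where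
  "p_closure_disjoint T sg p E E' \<longleftrightarrow> p_tr T sg p E \<inter> p_tr T sg p E' = {}"

definition p_closure_connected ::
  "'a topology \<Rightarrow> ('a \<Rightarrow> 'a set \<Rightarrow> 'p option) \<Rightarrow> 'p \<Rightarrow> 'a set \<Rightarrow> bool" where
  "p_closure_connected T sg p D \<longleftrightarrow>
     \<not> (\<exists>E E'. E \<noteq> {} \<and> E' \<noteq> {} \<and> E \<union> E' = D \<and> E \<inter> E' = {} \<and>
               p_closure_disjoint T sg p E E')"

end

(*
  Since sg x is injective, a point has at most one type-p neighbourhood. Hence being a
  p-accumulation point, and with it CL_1, CL_n and tr, distribute over nonempty unions, so
  tr(E) and tr(E') are disjoint iff tr{x} and tr{y} are disjoint for all x in E, y in E'.
  Thus p-closure connectedness is ordinary connectedness in the graph whose edges join x and y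
  when tr{x} meets tr{y}, and the partition of D is the one into connected components of the
  induced subgraph. For uniqueness: in any admissible partition no edge inside D leaves a
  block, since two blocks joined by an edge have a connected union; so blocks are components.
*)

theory Submission
  imports Defs
begin

definition rel_connected :: "'a rel \<Rightarrow> 'a set \<Rightarrow> bool" where
  "rel_connected R B \<longleftrightarrow>
     \<not> (\<exists>E E'. E \<noteq> {} \<and> E' \<noteq> {} \<and> E \<union> E' = B \<and> E \<inter> E' = {} \<and> R \<inter> E \<times> E' = {})"

definition linked_in :: "'a rel \<Rightarrow> 'a set \<Rightarrow> 'a rel" where
  "linked_in R D = (Restr R D)\<^sup>* \<inter> D \<times> D"

lemma rel_connectedD:
  assumes "rel_connected R B" "E \<union> E' = B" "E \<inter> E' = {}" "R \<inter> E \<times> E' = {}" "E \<noteq> {}"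
  shows "E' = {}"
  using assms unfolding rel_connected_def by blast

lemma rtrancl_exit_edge:
  assumes "(x, y) \<in> S\<^sup>*" "x \<in> E" "y \<notin> E"
  obtains u v where "(u, v) \<in> S" "u \<in> E" "v \<notin> E"
proof -
  have "\<exists>u v. (u, v) \<in> S \<and> u \<in> E \<and> v \<notin> E"
    using assms by (induction rule: rtrancl_induct) auto
  with that show thesis
    by blast
qed

lemma Restr_rtrancl_in:
  assumes "(x, y) \<in> (Restr R B)\<^sup>*" "x \<in> B"
  shows "y \<in> B"
  using assms by (induction rule: rtrancl_induct) auto

lemma rel_connected_iff_rtrancl:
  "rel_connected R B \<longleftrightarrow> (\<forall>x\<in>B. \<forall>y\<in>B. (x, y) \<in> (Restr R B)\<^sup>*)"
proof
  assume conn: "rel_connected R B"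
  show "\<forall>x\<in>B. \<forall>y\<in>B. (x, y) \<in> (Restr R B)\<^sup>*"
  proof (intro ballI)
    fix x y assume "x \<in> B" "y \<in> B"
    define E where "E = (Restr R B)\<^sup>* `` {x}"
    have "E \<subseteq> B"
      using \<open>x \<in> B\<close> Restr_rtrancl_in unfolding E_def by fastforce
    moreover have "R \<inter> E \<times> (B - E) = {}"
      using \<open>E \<subseteq> B\<close> unfolding E_def by (auto intro: rtrancl_into_rtrancl)
    moreover have "x \<in> E"
      unfolding E_def by simp
    ultimately have "B - E = {}"
      using rel_connectedD[OF conn, of E "B - E"] by blast
    then show "(x, y) \<in> (Restr R B)\<^sup>*"
      using \<open>y \<in> B\<close> unfolding E_def by blast
  qed
next
  assume paths: "\<forall>x\<in>B. \<forall>y\<in>B. (x, y) \<in> (Restr R B)\<^sup>*"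
  show "rel_connected R B"
    unfolding rel_connected_def
  proof (intro notI, elim exE conjE)
    fix E E' assume split: "E \<noteq> {}" "E' \<noteq> {}" "E \<union> E' = B" "E \<inter> E' = {}"
      and no_edge: "R \<inter> E \<times> E' = {}"
    obtain x y where "x \<in> E" "y \<in> E'"
      using split by blast
    then have "(x, y) \<in> (Restr R B)\<^sup>*" "y \<notin> E"
      using paths split by blast+
    then obtain u v where "(u, v) \<in> Restr R B" "u \<in> E" "v \<notin> E"
      using \<open>x \<in> E\<close> by (elim rtrancl_exit_edge)
    then show False
      using split no_edge by blast
  qed
qed

lemma rel_connected_Un:
  assumes "sym R" "rel_connected R A" "rel_connected R B" "(a, b) \<in> R" "a \<in> A" "b \<in> B"
  shows "rel_connected R (A \<union> B)"
  unfolding rel_connected_iff_rtrancl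
proof (intro ballI)
  let ?S = "Restr R (A \<union> B)"
  have inA: "(x, y) \<in> ?S\<^sup>*" if "x \<in> A" "y \<in> A" for x y
    using assms(2) that rtrancl_mono[of "Restr R A" ?S]
    unfolding rel_connected_iff_rtrancl by blast
  have inB: "(x, y) \<in> ?S\<^sup>*" if "x \<in> B" "y \<in> B" for x y
    using assms(3) that rtrancl_mono[of "Restr R B" ?S]
    unfolding rel_connected_iff_rtrancl by blast
  have ab: "(a, b) \<in> ?S\<^sup>*" and ba: "(b, a) \<in> ?S\<^sup>*"
    using assms(1,4-6) by (auto dest: symD)
  show "(x, y) \<in> ?S\<^sup>*" if "x \<in> A \<union> B" "y \<in> A \<union> B" for x y
    using that
  proof (elim UnE)
    assume "x \<in> A" "y \<in> B"
    then show ?thesis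
      using inA[OF _ assms(5)] ab inB[OF assms(6)] by (blast intro: rtrancl_trans)
  next
    assume "x \<in> B" "y \<in> A"
    then show ?thesis
      using inB[OF _ assms(6)] ba inA[OF assms(5)] by (blast intro: rtrancl_trans)
  qed (use inA inB in blast)+
qed

lemma equiv_linked_in:
  assumes "sym R"
  shows "equiv D (linked_in R D)"
proof (rule equivI)
  show "sym (linked_in R D)"
    unfolding linked_in_def
    using assms by (intro sym_Int sym_rtrancl) (auto simp: sym_def)
  show "trans (linked_in R D)"
    unfolding linked_in_def by (intro trans_Int trans_rtrancl) (auto simp: trans_def)
qed (auto simp: linked_in_def refl_on_def)

lemma rel_connected_linked_class:
  assumes "sym R"
  shows "rel_connected R (linked_in R D `` {x})"
proof -
  define C where "C = linked_in R D `` {x}"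
  have path_in_C: "(x, y) \<in> (Restr R C)\<^sup>*" if "(x, y) \<in> (Restr R D)\<^sup>*" "x \<in> D" for y
    using that
  proof (induction rule: rtrancl_induct)
    case (step y z)
    then have "(y, z) \<in> Restr R C"
      using Restr_rtrancl_in[of x _ R D] rtrancl_into_rtrancl[of x y "Restr R D" z]
      unfolding C_def linked_in_def by auto
    with step show ?case
      by (meson rtrancl_into_rtrancl)
  qed simp
  have "sym ((Restr R C)\<^sup>*)"
    using assms by (intro sym_rtrancl) (auto simp: sym_def)
  then have "(y, z) \<in> (Restr R C)\<^sup>*" if "y \<in> C" "z \<in> C" for y z
    using that path_in_C unfolding C_def linked_in_def
    by (blast dest: symD intro: rtrancl_trans)
  then show ?thesis
    unfolding C_def rel_connected_iff_rtrancl by blast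
qed

lemma Union_linked_classes_not_connected:
  assumes "sym R" "S \<subseteq> D // linked_in R D" "2 \<le> card S"
  shows "\<not> rel_connected R (\<Union>S)"
proof
  assume conn: "rel_connected R (\<Union>S)"
  have eqv: "equiv D (linked_in R D)"
    using assms(1) by (rule equiv_linked_in)
  have "finite S"
    using assms(3) card.infinite by force
  then obtain C1 C2 where C: "C1 \<in> S" "C2 \<in> S" "C1 \<noteq> C2"
    using assms(3) card_le_Suc0_iff_eq[of S] by auto
  then obtain x1 x2 where x: "x1 \<in> D" "C1 = linked_in R D `` {x1}"
    "x2 \<in> D" "C2 = linked_in R D `` {x2}"
    using assms(2) by (meson quotientE subsetD)
  then have "x1 \<in> \<Union>S" "x2 \<in> \<Union>S"
    using C equiv_class_self[OF eqv] by blast+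
  then have "(x1, x2) \<in> (Restr R (\<Union>S))\<^sup>*"
    using conn unfolding rel_connected_iff_rtrancl by blast
  moreover have "\<Union>S \<subseteq> D"
    using assms(2) Union_quotient[OF eqv] by blast
  ultimately have "(x1, x2) \<in> linked_in R D"
    using x rtrancl_mono[of "Restr R (\<Union>S)" "Restr R D"] unfolding linked_in_def by blast
  then show False
    using C x equiv_class_eq[OF eqv] by simp
qed

lemma partition_on_eq_linked_classes:
  assumes "sym R" "partition_on D Q" "\<forall>B\<in>Q. rel_connected R B"
    "\<forall>S\<subseteq>Q. 2 \<le> card S \<longrightarrow> \<not> rel_connected R (\<Union>S)"
  shows "Q = D // linked_in R D"
proof -
  have UQ: "\<Union>Q = D"
    using assms(2) by (simp add: partition_on_def)
  have "{(x, y). \<exists>B\<in>Q. x \<in> B \<and> y \<in> B} = linked_in R D"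
  proof (intro subset_antisym subrelI)
    fix x y assume "(x, y) \<in> {(x, y). \<exists>B\<in>Q. x \<in> B \<and> y \<in> B}"
    then obtain B where B: "B \<in> Q" "x \<in> B" "y \<in> B"
      by blast
    then have "(x, y) \<in> (Restr R B)\<^sup>*"
      using assms(3) by (simp add: rel_connected_iff_rtrancl)
    moreover have "B \<subseteq> D"
      using B(1) UQ by blast
    ultimately show "(x, y) \<in> linked_in R D"
      using B rtrancl_mono[of "Restr R B" "Restr R D"] unfolding linked_in_def by blast
  next
    fix x y assume "(x, y) \<in> linked_in R D"
    then have path: "(x, y) \<in> (Restr R D)\<^sup>*" and "x \<in> D"
      by (auto simp: linked_in_def)
    then obtain B where B: "B \<in> Q" "x \<in> B"
      using UQ by blast
    have "y \<in> B"
    proof (rule ccontr)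
      assume "y \<notin> B"
      then obtain u v where uv: "(u, v) \<in> Restr R D" "u \<in> B" "v \<notin> B"
        using path B(2) by (elim rtrancl_exit_edge)
      then obtain B' where B': "B' \<in> Q" "v \<in> B'"
        using UQ by blast
      have "rel_connected R (B \<union> B')"
        using assms(3) B B' uv by (intro rel_connected_Un[OF assms(1), of _ _ u v]) auto
      moreover have "B \<noteq> B'"
        using B' uv by blast
      ultimately show False
        using assms(4)[rule_format, of "{B, B'}"] B(1) B'(1) by simp
    qed
    with B show "(x, y) \<in> {(x, y). \<exists>B\<in>Q. x \<in> B \<and> y \<in> B}"
      by blast
  qed
  then show ?thesis
    using partition_on_eq_quotient[OF assms(2)] by simp
qed

theorem ex1_partition_into_connected_components:
  assumes "sym R"
  shows "\<exists>!Q. partition_on D Q \<and> (\<forall>B\<in>Q. rel_connected R B) \<and>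
              (\<forall>S\<subseteq>Q. 2 \<le> card S \<longrightarrow> \<not> rel_connected R (\<Union>S))"
proof (rule ex1I[of _ "D // linked_in R D"])
  show "partition_on D (D // linked_in R D) \<and> (\<forall>B\<in>D // linked_in R D. rel_connected R B) \<and>
      (\<forall>S\<subseteq>D // linked_in R D. 2 \<le> card S \<longrightarrow> \<not> rel_connected R (\<Union>S))"
    using partition_on_quotient[OF equiv_linked_in[OF assms]] rel_connected_linked_class[OF assms]
      Union_linked_classes_not_connected[OF assms] by (auto elim: quotientE)
qed (use partition_on_eq_linked_classes[OF assms] in blast)

lemma typed_top_space_nbhd_unique:
  assumes "typed_top_space T P le sg" "x \<in> topspace T" "sg x U = Some p" "sg x V = Some p"
  shows "U = V"
proof -
  have refl: "\<forall>q\<in>P. le q q"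
    and sg_in_P: "\<forall>x\<in>topspace T. \<forall>U. sg x U \<noteq> None \<longrightarrow> openin T U \<and> x \<in> U \<and> the (sg x U) \<in> P"
    and embed: "\<forall>x\<in>topspace T. \<forall>U V. sg x U \<noteq> None \<longrightarrow> sg x V \<noteq> None \<longrightarrow>
                  (le (the (sg x U)) (the (sg x V)) \<longleftrightarrow> U \<subseteq> V)"
    using assms(1) by (simp_all add: typed_top_space_def)
  have "le p p"
    using refl sg_in_P assms(2,3) by force
  then have "U \<subseteq> V" and "V \<subseteq> U"
    using embed[rule_format, OF assms(2), of U V] embed[rule_format, OF assms(2), of V U]
      assms(3,4) by simp_all
  then show ?thesis
    by blast
qed

lemma p_acc_point_UN:
  assumes "typed_top_space T P le sg" "x \<in> topspace T" "I \<noteq> {}"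
  shows "p_acc_point sg p x (\<Union>i\<in>I. A i) \<longleftrightarrow> (\<exists>i\<in>I. p_acc_point sg p x (A i))"
proof (cases "\<exists>U. sg x U = Some p")
  case True
  then obtain U where U: "sg x U = Some p"
    by blast
  then have "sg x V = Some p \<longleftrightarrow> V = U" for V
    using typed_top_space_nbhd_unique[OF assms(1,2)] by blast
  then show ?thesis
    unfolding p_acc_point_def by auto
next
  case False
  then show ?thesis
    using assms(3) unfolding p_acc_point_def by auto
qed

lemma p_CL1_UN:
  assumes "typed_top_space T P le sg" "I \<noteq> {}"
  shows "p_CL1 T sg p (\<Union>i\<in>I. A i) = (\<Union>i\<in>I. p_CL1 T sg p (A i))"
  using p_acc_point_UN[OF assms(1) _ assms(2)] assms(2) unfolding p_CL1_def by auto

lemma p_CL_UN: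
  assumes "typed_top_space T P le sg" "I \<noteq> {}"
  shows "p_CL T sg p n (\<Union>i\<in>I. A i) = (\<Union>i\<in>I. p_CL T sg p n (A i))"
  by (induction n) (simp_all add: p_CL1_UN[OF assms])

lemma p_tr_UN:
  assumes "typed_top_space T P le sg" "I \<noteq> {}"
  shows "p_tr T sg p (\<Union>i\<in>I. A i) = (\<Union>i\<in>I. p_tr T sg p (A i))"
  unfolding p_tr_def p_CL_UN[OF assms] by blast

definition p_touching :: "'a topology \<Rightarrow> ('a \<Rightarrow> 'a set \<Rightarrow> 'p option) \<Rightarrow> 'p \<Rightarrow> 'a rel" where
  "p_touching T sg p = {(x, y). p_tr T sg p {x} \<inter> p_tr T sg p {y} \<noteq> {}}"

lemma p_closure_disjoint_iff:
  assumes "typed_top_space T P le sg" "E \<noteq> {}" "E' \<noteq> {}"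
  shows "p_closure_disjoint T sg p E E' \<longleftrightarrow> p_touching T sg p \<inter> E \<times> E' = {}"
proof -
  have "p_tr T sg p E = (\<Union>x\<in>E. p_tr T sg p {x})" "p_tr T sg p E' = (\<Union>y\<in>E'. p_tr T sg p {y})"
    using p_tr_UN[OF assms(1) assms(2), where A = "\<lambda>x. {x}"]
      p_tr_UN[OF assms(1) assms(3), where A = "\<lambda>x. {x}"] by simp_all
  then show ?thesis
    unfolding p_closure_disjoint_def p_touching_def by blast
qed

lemma p_closure_connected_iff_rel_connected:
  assumes "typed_top_space T P le sg"
  shows "p_closure_connected T sg p B \<longleftrightarrow> rel_connected (p_touching T sg p) B"
  unfolding p_closure_connected_def rel_connected_def
  using p_closure_disjoint_iff[OF assms] by metis

theorem lemma3p9: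
  fixes T :: "'a topology" and P :: "'p set" and le :: "'p \<Rightarrow> 'p \<Rightarrow> bool"
    and sg :: "'a \<Rightarrow> 'a set \<Rightarrow> 'p option" and D :: "'a set" and p :: 'p
  assumes "typed_top_space T P le sg"
    and "finite (topspace T)"
    and "D \<subseteq> topspace T"
    and "p \<in> P"
  shows "\<exists>!Q. partition_on D Q \<and>
              (\<forall>B\<in>Q. p_closure_connected T sg p B) \<and>
              (\<forall>S\<subseteq>Q. 2 \<le> card S \<longrightarrow> \<not> p_closure_connected T sg p (\<Union>S))"
proof -
  have "sym (p_touching T sg p)"
    by (auto simp: p_touching_def sym_def)
  then show ?thesis
    unfolding p_closure_connected_iff_rel_connected[OF assms(1)]
    by (rule ex1_partition_into_connected_components)
qed

end
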